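(* Let $C=(C_{i,j})$ be an $m\times n$ evolutionary stable (ES) configuration with $m,n>2$. Then $n$ is divisible by $3$, $C_{m,j}=1$ for all $1\le j\le n$, and row $m-1$ is the string $101\,101\cdots101$, i.e.\ $C_{m-1,j}=0$ if $j\equiv 2\pmod 3$ and $C_{m-1,j}=1$ otherwise.
   Context: An $m\times n$ configuration is a $0$-$1$ matrix $C=(C_{i,j})$, $1\le i\le m$, $1\le j\le n$; $C_{i,j}=1$ means lot $(i,j)$ is occupied by a house. Row $1$ is the northernmost, row $m$ the southernmost; column $1$ westernmost, column $n$ easternmost. A house at $(i,j)$ is blocked from sunlight if the three lots $(i,j-1)$, $(i,j+1)$, $(i+1,j)$ all lie inside the grid and are all occupied (lots outside the grid never obstruct sunlight). $C$ is permissible if no house is blocked, and maximal if it is permissible and setting any single empty lot to $1$ yields a non-permissible configuration. A maximal configuration is resistant to predators if, for every empty lot, putting a house on it results in that new house being blocked; it is resistant to altruists if, for every empty lot, putting a house on it results in some other (already existing) house being blocked. An ES configuration is a maximal configuration resistant to both predators and altruists. *)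

theory Defs
  imports Main
begin

text \<open>A configuration is a function C :: nat => nat => bool; only the values
  C i j with 1 <= i <= m and 1 <= j <= n are relevant (True = occupied).\<close>

definition in_grid :: "nat \<Rightarrow> nat \<Rightarrow> nat \<Rightarrow> nat \<Rightarrow> bool" where
  "in_grid m n i j \<longleftrightarrow> 1 \<le> i \<and> i \<le> m \<and> 1 \<le> j \<and> j \<le> n"

definition blocked :: "nat \<Rightarrow> nat \<Rightarrow> (nat \<Rightarrow> nat \<Rightarrow> bool) \<Rightarrow> nat \<Rightarrow> nat \<Rightarrow> bool" where
  "blocked m n C i j \<longleftrightarrow> in_grid m n i j \<and> C i j \<and>
     2 \<le> j \<and> in_grid m n i (j - 1) \<and> C i (j - 1) \<and>
     in_grid m n i (j + 1) \<and> C i (j + 1) \<and>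
     in_grid m n (i + 1) j \<and> C (i + 1) j"

definition permissible :: "nat \<Rightarrow> nat \<Rightarrow> (nat \<Rightarrow> nat \<Rightarrow> bool) \<Rightarrow> bool" where
  "permissible m n C \<longleftrightarrow> (\<forall>i j. in_grid m n i j \<longrightarrow> \<not> blocked m n C i j)"

definition add_house :: "(nat \<Rightarrow> nat \<Rightarrow> bool) \<Rightarrow> nat \<Rightarrow> nat \<Rightarrow> (nat \<Rightarrow> nat \<Rightarrow> bool)" where
  "add_house C i j = (\<lambda>a b. if a = i \<and> b = j then True else C a b)"

definition maximal :: "nat \<Rightarrow> nat \<Rightarrow> (nat \<Rightarrow> nat \<Rightarrow> bool) \<Rightarrow> bool" where
  "maximal m n C \<longleftrightarrow> permissible m n C \<and>
     (\<forall>i j. in_grid m n i j \<and> \<not> C i j \<longrightarrow> \<not> permissible m n (add_house C i j))"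

definition resistant_predators :: "nat \<Rightarrow> nat \<Rightarrow> (nat \<Rightarrow> nat \<Rightarrow> bool) \<Rightarrow> bool" where
  "resistant_predators m n C \<longleftrightarrow> maximal m n C \<and>
     (\<forall>i j. in_grid m n i j \<and> \<not> C i j \<longrightarrow> blocked m n (add_house C i j) i j)"

definition resistant_altruists :: "nat \<Rightarrow> nat \<Rightarrow> (nat \<Rightarrow> nat \<Rightarrow> bool) \<Rightarrow> bool" where
  "resistant_altruists m n C \<longleftrightarrow> maximal m n C \<and>
     (\<forall>i j. in_grid m n i j \<and> \<not> C i j \<longrightarrow>
        (\<exists>a b. in_grid m n a b \<and> C a b \<and> blocked m n (add_house C i j) a b))"

definition ES_config :: "nat \<Rightarrow> nat \<Rightarrow> (nat \<Rightarrow> nat \<Rightarrow> bool) \<Rightarrow> bool" where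
  "ES_config m n C \<longleftrightarrow> maximal m n C \<and> resistant_predators m n C \<and> resistant_altruists m n C"

end

(*
  Predator resistance says that the W, E and S neighbours of an empty lot are houses inside
  the grid: empty lots are isolated, avoid the border columns, and row m is full.
  Permissibility then gives every house in rows 1..m-1 and columns 2..n-1 an empty W, E
  or S neighbour, and altruist resistance says that building on an empty lot would block
  its W, E or N neighbour.

  These local rules make the empty lots of consecutive rows alternate, which ties their
  numbers together through the positions of the outermost empty lots. Hence the excess
  3 (k - 1) - (last - first) of a row with k empty lots, corrected by weights at both ends,
  is a potential that does not increase from row to row. In row 2 empty lots are at least
  3 apart (two at distance 2 would force an empty lot in row 1 that protects no house), so
  the potential is at most 0 there. In row m - 1 consecutive empty lots are 2 or 3 apart,
  so the potential is at least 0, with equality only if the empty lots are exactly the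
  columns 2, 5, ..., n - 1. Hence row m - 1 reads 101 101 ... 101 and 3 divides n.
*)
theory Submission
  imports Defs
begin

lemma Max_Min_insert_greater:
  fixes A :: "'a::linorder set"
  assumes "finite A" "A \<noteq> {}" "\<forall>a\<in>A. a < b"
  shows "Max (insert b A) = b" "Min (insert b A) = Min A" "card (insert b A) = card A + 1"
proof -
  show "Max (insert b A) = b"
    using assms by (simp add: Max_insert2 less_imp_le)
  have "Min A < b"
    using assms by simp
  then show "Min (insert b A) = Min A"
    using assms by (simp add: Min_insert)
  show "card (insert b A) = card A + 1"
    using assms by auto
qed

lemma Max_diff_Min_ge_if_spread:
  fixes S :: "nat set"
  assumes "finite S" "S \<noteq> {}" and "\<forall>x\<in>S. \<forall>y\<in>S. x < y \<longrightarrow> x + d \<le> y"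
  shows "d * (card S - 1) \<le> Max S - Min S"
  using assms
proof (induction S rule: finite_linorder_max_induct)
  case (insert b A)
  show ?case
  proof (cases "A = {}")
    case False
    note ins = Max_Min_insert_greater[OF insert.hyps(1) False insert.hyps(2)]
    have "d * (card A - 1) \<le> Max A - Min A"
      using insert False by blast
    moreover have "Max A + d \<le> b"
      using insert.hyps insert.prems(2) False by simp
    moreover have "Min A \<le> Max A" "card A \<noteq> 0"
      using insert.hyps(1) False by simp_all
    ultimately show ?thesis
      unfolding ins by (cases "card A") (simp_all add: algebra_simps)
  qed simp
qed simp

lemma Max_diff_Min_le_if_gaps_two_or_three:
  fixes S :: "nat set"
  assumes "finite S" "S \<noteq> {}"
    and "\<forall>x\<in>S. Suc x \<notin> S"
    and "\<forall>x\<in>S. x < Max S \<longrightarrow> (\<exists>y\<in>S. x < y \<and> y \<le> x + 3)"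
  shows "Max S - Min S + of_bool (\<exists>x\<in>S. x + 2 \<in> S) \<le> 3 * (card S - 1)"
  using assms
proof (induction S rule: finite_linorder_max_induct)
  case (insert b A)
  show ?case
  proof (cases "A = {}")
    case False
    note ins = Max_Min_insert_greater[OF insert.hyps(1) False insert.hyps(2)]
    define z where "z = Max A"
    have z: "z \<in> A" "\<forall>a\<in>A. a \<le> z" "z < b"
      using insert.hyps False by (simp_all add: z_def)
    have "\<forall>x\<in>A. x < Max A \<longrightarrow> (\<exists>y\<in>A. x < y \<and> y \<le> x + 3)"
    proof (intro ballI impI)
      fix x assume "x \<in> A" "x < Max A"
      then have "x < Max (insert b A)"
        using z unfolding ins z_def by simp
      then obtain y where "y \<in> insert b A" "x < y" "y \<le> x + 3"
        using insert.prems(3) \<open>x \<in> A\<close> by blast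
      then show "\<exists>y\<in>A. x < y \<and> y \<le> x + 3"
        using z \<open>x < Max A\<close> by (auto simp: z_def)
    qed
    then have IH: "z - Min A + of_bool (\<exists>x\<in>A. x + 2 \<in> A) \<le> 3 * (card A - 1)"
      using insert False by (simp add: z_def)
    obtain y where "y \<in> insert b A" "z < y" "y \<le> z + 3"
      using insert.prems(3) z unfolding ins by blast
    moreover have "b \<noteq> z + 1"
      using insert.prems(2) z by auto
    ultimately have "b - z + of_bool (b = z + 2) \<le> 3"
      using z by auto
    moreover have "of_bool (\<exists>x\<in>insert b A. x + 2 \<in> insert b A)
        \<le> of_bool (\<exists>x\<in>A. x + 2 \<in> A) + (of_bool (b = z + 2) :: nat)"
    proof (cases "\<exists>x\<in>insert b A. x + 2 \<in> insert b A")
      case True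
      then obtain x where x: "x \<in> A" "x + 2 \<in> insert b A"
        using insert.hyps(2) by fastforce
      moreover have "z \<noteq> x + 1"
        using insert.prems(2) z(1) x(1) by auto
      ultimately have "x + 2 \<in> A \<or> b = z + 2"
        using z by fastforce
      then show ?thesis
        using x(1) by auto
    qed simp
    moreover have "Min A \<le> z"
      using z insert.hyps(1) by simp
    moreover have "card A \<noteq> 0"
      using insert.hyps(1) False by simp
    then have "3 * card A = 3 * (card A - 1) + 3"
      by (cases "card A") simp_all
    ultimately show ?thesis
      using IH z(3) unfolding ins by linarith
  qed simp
qed simp

definition separated_by :: "'a::linorder set \<Rightarrow> 'a set \<Rightarrow> bool" where
  "separated_by A B \<longleftrightarrow> (\<forall>x\<in>A. \<forall>y\<in>A. x < y \<longrightarrow> (\<exists>z\<in>B. x < z \<and> z < y))"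

definition alternating :: "'a::linorder set \<Rightarrow> 'a set \<Rightarrow> bool" where
  "alternating A B \<longleftrightarrow> finite A \<and> finite B \<and> A \<noteq> {} \<and> B \<noteq> {} \<and> A \<inter> B = {}
     \<and> separated_by A B \<and> separated_by B A"

lemma alternating_sym: "alternating A B \<longleftrightarrow> alternating B A"
  unfolding alternating_def by blast

lemma alternating_Min_Max_neq:
  assumes "alternating A B"
  shows "Min A \<noteq> Min B" "Max A \<noteq> Max B"
  using assms Min_in Max_in unfolding alternating_def by (metis disjoint_iff)+

lemma alternating_Diff_Max:
  fixes A B :: "'a::linorder set"
  assumes alt: "alternating A B" and less: "Max A < Max B" and ne: "B - {Max B} \<noteq> {}"
  shows "alternating A (B - {Max B})" and "Max (B - {Max B}) < Max A"
proof -
  have fin: "finite A" "finite B" and sepA: "separated_by A B" and sepB: "separated_by B A"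
    using alt unfolding alternating_def by blast+
  have "separated_by A (B - {Max B})"
    unfolding separated_by_def
  proof (intro ballI impI)
    fix x y assume xy: "x \<in> A" "y \<in> A" "x < y"
    then obtain z where "z \<in> B" "x < z" "z < y"
      using sepA unfolding separated_by_def by blast
    moreover have "y \<le> Max A"
      using xy fin(1) by simp
    ultimately show "\<exists>z\<in>B - {Max B}. x < z \<and> z < y"
      using less by force
  qed
  moreover have "separated_by (B - {Max B}) A"
    using sepB unfolding separated_by_def by blast
  ultimately show "alternating A (B - {Max B})"
    using alt ne unfolding alternating_def by blast
  have "Max B \<in> B" "Max (B - {Max B}) \<in> B" "Max (B - {Max B}) < Max B"
    using fin(2) ne Max_in[of "B - {Max B}"] Max_ge[OF fin(2)] by (auto simp: order.strict_iff_order)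
  then obtain a where "a \<in> A" "Max (B - {Max B}) < a"
    using sepB unfolding separated_by_def by blast
  then show "Max (B - {Max B}) < Max A"
    using fin(1) by (meson Max_ge less_le_trans)
qed

lemma alternating_card_remove_Max:
  fixes A B :: "'a::linorder set"
  defines "B' \<equiv> B - {Max B}"
  assumes alt: "alternating A B" and less: "Max A < Max B"
    and IH: "alternating A B' \<Longrightarrow>
      card B' + of_bool (Min A < Min B') + of_bool (Max B' < Max A) = card A + 1"
  shows "card B + of_bool (Min A < Min B) + of_bool (Max B < Max A) = card A + 1"
proof -
  have fin: "finite A" "finite B" and ne: "A \<noteq> {}" "B \<noteq> {}" and sepA: "separated_by A B"
    using alt unfolding alternating_def by blast+
  have B_eq: "B = insert (Max B) B'" and B'_less: "\<forall>b\<in>B'. b < Max B"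
    using fin Max_in[OF fin(2) ne(2)] by (auto simp: B'_def order.strict_iff_order)
  show ?thesis
  proof (cases "B' = {}")
    case True
    have "x = Max A" if x: "x \<in> A" for x
    proof (rule ccontr)
      assume "x \<noteq> Max A"
      then have "x < Max A"
        using x fin(1) by (simp add: order.strict_iff_order)
      then obtain z where "z \<in> B" "z < Max A"
        using sepA x fin(1) ne(1) unfolding separated_by_def by (meson Max_in)
      moreover have "z = Max B"
        using \<open>z \<in> B\<close> True unfolding B'_def by blast
      ultimately show False
        using less by simp
    qed
    then have "A = {Max A}"
      using fin(1) ne(1) by auto
    moreover have "B = {Max B}"
      using B_eq True by simp
    ultimately obtain a b where "A = {a}" "B = {b}"
      by blast
    then show ?thesis
      using less by simp
  next
    case False
    then show ?thesis
      using IH alternating_Diff_Max[OF alt less] Max_Min_insert_greater[OF _ False B'_less, folded B_eq]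
        fin(2) less unfolding B'_def by simp
  qed
qed

lemma alternating_card:
  fixes A B :: "'a::linorder set"
  assumes "alternating A B"
  shows "card B + of_bool (Min A < Min B) + of_bool (Max B < Max A) = card A + 1"
  using assms
proof (induction "card A + card B" arbitrary: A B rule: less_induct)
  case less
  have fin: "finite A" "finite B" and ne: "A \<noteq> {}" "B \<noteq> {}"
    using less.prems unfolding alternating_def by blast+
  show ?case
  proof (cases "Max A < Max B")
    case True
    have "card A + card (B - {Max B}) < card A + card B"
      using fin ne by (simp add: card_gt_0_iff)
    then show ?thesis
      using alternating_card_remove_Max[OF less.prems True] less.hyps by blast
  next
    case False
    then have "Max B < Max A"
      using alternating_Min_Max_neq(2)[OF less.prems] by simp
    moreover have "card B + card (A - {Max A}) < card A + card B"
      using fin ne by (simp add: card_gt_0_iff)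
    ultimately have "card A + of_bool (Min B < Min A) + of_bool (Max A < Max B) = card B + 1"
      using alternating_card_remove_Max[of B A] less alternating_sym by blast
    moreover have "Min B < Min A \<longleftrightarrow> \<not> Min A < Min B"
      using alternating_Min_Max_neq(1)[OF less.prems] by auto
    moreover have "\<not> Max A < Max B"
      using \<open>Max B < Max A\<close> by simp
    ultimately show ?thesis
      using \<open>Max B < Max A\<close> by (cases "Min A < Min B") auto
  qed
qed

definition end_weight :: "nat \<Rightarrow> int" where
  "end_weight p = (if p = 1 then -1 else if p = 2 then 1 else 0)"

lemma end_weight_step:
  assumes "p \<le> 2" "q \<le> 2" "q \<noteq> p" "p = 2 \<Longrightarrow> q = 0"
  shows "2 * (int q - int p) + 3 - 6 * of_bool (p < q) + end_weight p - end_weight q \<le> 0"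
proof -
  have "p \<in> {0, 1, 2}" "q \<in> {0, 1, 2}"
    using assms(1,2) by auto
  then show ?thesis
    using assms(3,4) by (auto simp: end_weight_def)
qed

text \<open>\<open>E i j\<close> says that lot \<open>(i, j)\<close> of an ES configuration with \<open>M = m - 1\<close> is empty;
  \<open>house_unblocked\<close> is permissibility in rows \<open>1..M\<close> (row \<open>M + 1\<close> being full) and
  \<open>altruist_resistant\<close> lists the three ways a house built at \<open>(i, j)\<close> can block a neighbour.\<close>

locale ES_empty_lots =
  fixes E :: "nat \<Rightarrow> nat \<Rightarrow> bool" and M n :: nat
  assumes empty_range: "E i j \<Longrightarrow> 1 \<le> i \<and> i \<le> M \<and> 2 \<le> j \<and> j + 1 \<le> n"
    and empty_isolated_right: "E i j \<Longrightarrow> \<not> E i (j + 1)"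
    and empty_isolated_below: "E i j \<Longrightarrow> \<not> E (i + 1) j"
    and house_unblocked: "\<lbrakk>1 \<le> i; i \<le> M; 2 \<le> j; j + 1 \<le> n; \<not> E i j\<rbrakk>
      \<Longrightarrow> E i (j - 1) \<or> E i (j + 1) \<or> E (i + 1) j"
    and altruist_resistant: "E i j \<Longrightarrow>
        (3 \<le> j \<and> \<not> E i (j - 2) \<and> \<not> E (i + 1) (j - 1))
      \<or> (j + 2 \<le> n \<and> \<not> E i (j + 2) \<and> \<not> E (i + 1) (j + 1))
      \<or> (2 \<le> i \<and> \<not> E (i - 1) (j - 1) \<and> \<not> E (i - 1) j \<and> \<not> E (i - 1) (j + 1))"
    and n_ge_4: "4 \<le> n" and M_ge_2: "2 \<le> M"
begin

lemma empty_isolated_left: "E i (j + 1) \<Longrightarrow> \<not> E i j"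
  using empty_isolated_right by blast

lemma empty_isolated_above: "E (i + 1) j \<Longrightarrow> \<not> E i j"
  using empty_isolated_below by blast

lemma reflection: "ES_empty_lots (\<lambda>i j. E i (n + 1 - j)) M n"
proof
  fix i j
  show "E i (n + 1 - j) \<Longrightarrow> 1 \<le> i \<and> i \<le> M \<and> 2 \<le> j \<and> j + 1 \<le> n"
    using empty_range[of i "n + 1 - j"] by auto
  show "\<not> E i (n + 1 - (j + 1))" if "E i (n + 1 - j)"
  proof -
    have "n + 1 - j = n - j + 1"
      using empty_range[OF that] by linarith
    then show ?thesis
      using that empty_isolated_left[of i "n - j"] by simp
  qed
  show "E i (n + 1 - j) \<Longrightarrow> \<not> E (i + 1) (n + 1 - j)"
    by (rule empty_isolated_below)
  show "\<lbrakk>1 \<le> i; i \<le> M; 2 \<le> j; j + 1 \<le> n; \<not> E i (n + 1 - j)\<rbrakk>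
      \<Longrightarrow> E i (n + 1 - (j - 1)) \<or> E i (n + 1 - (j + 1)) \<or> E (i + 1) (n + 1 - j)"
    using house_unblocked[of i "n + 1 - j"] by (auto simp: Suc_diff_le)
  show "E i (n + 1 - j) \<Longrightarrow>
        (3 \<le> j \<and> \<not> E i (n + 1 - (j - 2)) \<and> \<not> E (i + 1) (n + 1 - (j - 1)))
      \<or> (j + 2 \<le> n \<and> \<not> E i (n + 1 - (j + 2)) \<and> \<not> E (i + 1) (n + 1 - (j + 1)))
      \<or> (2 \<le> i \<and> \<not> E (i - 1) (n + 1 - (j - 1)) \<and> \<not> E (i - 1) (n + 1 - j)
          \<and> \<not> E (i - 1) (n + 1 - (j + 1)))"
    using altruist_resistant[of i "n + 1 - j"] empty_range[of i "n + 1 - j"]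
    by (auto simp: Suc_diff_le)
qed (use n_ge_4 M_ge_2 in auto)

lemma no_four_houses:
  assumes "1 \<le> i" "i \<le> M" "2 \<le> j" "j + 2 \<le> n"
  shows "E i (j - 1) \<or> E i j \<or> E i (j + 1) \<or> E i (j + 2)"
proof (rule ccontr)
  assume "\<not> ?thesis"
  then have "E (i + 1) j" "E (i + 1) (j + 1)"
    using house_unblocked[of i j] house_unblocked[of i "j + 1"] assms by auto
  then show False
    using empty_isolated_right by blast
qed

lemma empty_near_left_border: "1 \<le> i \<Longrightarrow> i \<le> M \<Longrightarrow> E i 2 \<or> E i 3 \<or> E i 4"
  using no_four_houses[of i 2] empty_range[of i 1] n_ge_4 by fastforce

lemma empty_below_left_border_houses: "1 \<le> i \<Longrightarrow> i \<le> M \<Longrightarrow> \<not> E i 2 \<Longrightarrow> \<not> E i 3 \<Longrightarrow> E (i + 1) 2"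
  using house_unblocked[of i 2] empty_range[of i 1] n_ge_4 by fastforce

lemma empty_below_gap_two:
  assumes "i + 1 \<le> M" "E i x" "E i (x + 2)"
  shows "E (i + 1) (x + 1)"
  \<comment> \<open>Otherwise \<open>(i + 2, x + 1)\<close>, \<open>(i + 1, x - 1)\<close> and \<open>(i + 1, x + 3)\<close> are forced empty,
    so both empty lots of row \<open>i\<close> must protect their N neighbours, and then the house at
    \<open>(i - 1, x + 1)\<close> is blocked.\<close>
proof (rule ccontr)
  assume no: "\<not> E (i + 1) (x + 1)"
  have range: "1 \<le> i" "2 \<le> x" "x + 3 \<le> n"
    using empty_range[OF assms(2)] empty_range[OF assms(3)] by auto
  have below: "\<not> E (i + 1) x" "\<not> E (i + 1) (x + 2)"
    using empty_isolated_below assms(2,3) by blast+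
  have "E (i + 2) (x + 1)"
    using house_unblocked[of "i + 1" "x + 1"] no below assms(1) range by simp
  then have "\<not> E (i + 2) x" "\<not> E (i + 2) (x + 2)"
    using empty_isolated_left[of "i + 2" x] empty_isolated_right[of "i + 2" "x + 1"] by simp_all
  then have "E (i + 1) (x - 1)" "E (i + 1) (x + 3)"
    using house_unblocked[of "i + 1" x] house_unblocked[of "i + 1" "x + 2"] no below
      assms(1) range by (simp_all add: numeral_eq_Suc)
  then have "2 \<le> i" "\<not> E (i - 1) x" "\<not> E (i - 1) (x + 1)" "\<not> E (i - 1) (x + 2)"
    using altruist_resistant[OF assms(2)] altruist_resistant[OF assms(3)] assms(2,3)
    by (simp_all add: numeral_eq_Suc)
  moreover have "\<not> E i (x + 1)"
    using empty_isolated_right assms(2) by blast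
  ultimately show False
    using house_unblocked[of "i - 1" "x + 1"] assms(1) range by (cases i) simp_all
qed

definition empty_cols :: "nat \<Rightarrow> nat set" where
  "empty_cols i = {j. E i j}"

lemma finite_empty_cols: "finite (empty_cols i)"
  by (rule finite_subset[of _ "{..n}"]) (auto simp: empty_cols_def dest: empty_range)

lemma empty_cols_nonempty: "1 \<le> i \<Longrightarrow> i \<le> M \<Longrightarrow> empty_cols i \<noteq> {}"
  using empty_near_left_border unfolding empty_cols_def by blast

lemma empty_above_between:
  assumes "E (i + 1) x" "E (i + 1) y" "x < y" "1 \<le> i"
  shows "\<exists>z. x < z \<and> z < y \<and> E i z"
proof -
  have "y \<noteq> x + 1"
    using assms(1,2) empty_isolated_right by blast
  then have "x + 2 \<le> y"
    using assms(3) by linarith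
  show ?thesis
  proof (cases "E i (x + 1)")
    case True
    then show ?thesis
      using \<open>x + 2 \<le> y\<close> by (intro exI[of _ "x + 1"]) simp
  next
    case False
    have "\<not> E i x" "\<not> E (i + 1) (x + 1)"
      using assms(1) empty_isolated_above empty_isolated_right by blast+
    then have "E i (x + 2)"
      using house_unblocked[of i "x + 1"] False assms empty_range[OF assms(1)]
        empty_range[OF assms(2)] \<open>x + 2 \<le> y\<close>
      by (auto simp: numeral_eq_Suc)
    moreover have "x + 2 \<noteq> y"
      using assms(2) calculation empty_isolated_below by blast
    ultimately show ?thesis
      using \<open>x + 2 \<le> y\<close> by (intro exI[of _ "x + 2"]) simp
  qed
qed

lemma empty_below_between:
  assumes "E i x" "E i y" "x < y" "i + 1 \<le> M"
  shows "\<exists>z. x < z \<and> z < y \<and> E (i + 1) z"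
proof (cases "y = x + 2")
  case True
  then show ?thesis
    using empty_below_gap_two assms by fastforce
next
  case False
  have "y \<noteq> x + 1"
    using assms(1,2) empty_isolated_right by blast
  with False have "x + 3 \<le> y"
    using assms(3) by linarith
  moreover have "E (i + 1) x \<or> E (i + 1) (x + 1) \<or> E (i + 1) (x + 2) \<or> E (i + 1) (x + 3)"
    using no_four_houses[of "i + 1" "x + 1"] assms empty_range[OF assms(1)]
      empty_range[OF assms(2)] \<open>x + 3 \<le> y\<close>
    by (simp add: numeral_eq_Suc)
  moreover have "\<not> E (i + 1) x" "\<not> E (i + 1) y"
    using assms(1,2) empty_isolated_below by blast+
  ultimately obtain z where "z \<in> {x + 1, x + 2, x + 3}" "E (i + 1) z" "z \<noteq> y"
    by blast
  then show ?thesis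
    using \<open>x + 3 \<le> y\<close> by (intro exI[of _ z]) auto
qed

lemma alternating_empty_cols:
  assumes "1 \<le> i" "i + 1 \<le> M"
  shows "alternating (empty_cols i) (empty_cols (i + 1))"
proof -
  have "separated_by (empty_cols i) (empty_cols (i + 1))"
    using empty_below_between[OF _ _ _ assms(2)] unfolding separated_by_def empty_cols_def
    by blast
  moreover have "separated_by (empty_cols (i + 1)) (empty_cols i)"
    using empty_above_between[OF _ _ _ assms(1)] unfolding separated_by_def empty_cols_def
    by blast
  moreover have "empty_cols i \<inter> empty_cols (i + 1) = {}"
    using empty_isolated_below unfolding empty_cols_def by blast
  ultimately show ?thesis
    using finite_empty_cols empty_cols_nonempty assms unfolding alternating_def by simp
qed

definition left_margin :: "nat \<Rightarrow> nat" where
  "left_margin i = (if E i 2 then 0 else if E i 3 then 1 else 2)"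

lemma left_margin_le: "left_margin i \<le> 2"
  by (simp add: left_margin_def)

lemma Min_empty_cols:
  assumes "1 \<le> i" "i \<le> M"
  shows "Min (empty_cols i) = left_margin i + 2"
proof (rule Min_eqI[OF finite_empty_cols])
  show "left_margin i + 2 \<in> empty_cols i"
    using empty_near_left_border[OF assms] unfolding left_margin_def empty_cols_def
    by (cases "E i 2"; cases "E i 3") (simp_all add: eval_nat_numeral)
  show "left_margin i + 2 \<le> y" if "y \<in> empty_cols i" for y
  proof -
    have "E i y" "2 \<le> y"
      using that empty_range[of i y] by (auto simp: empty_cols_def)
    then show ?thesis
      unfolding left_margin_def by (cases "y = 2"; cases "y = 3") auto
  qed
qed

lemma left_margin_step:
  assumes "1 \<le> i" "i + 1 \<le> M"
  shows "left_margin (i + 1) \<noteq> left_margin i" and "left_margin i = 2 \<Longrightarrow> left_margin (i + 1) = 0"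
  using empty_isolated_below[of i 2] empty_isolated_below[of i 3] empty_below_left_border_houses[of i] assms
  unfolding left_margin_def by (auto split: if_splits)

lemma left_margin_last_row: "left_margin M \<noteq> 2"
  using empty_below_left_border_houses[of M] empty_range[of "M + 1" 2] M_ge_2
  unfolding left_margin_def by (auto split: if_splits)

lemma second_row_no_gap_two:
  assumes "E 2 x"
  shows "\<not> E 2 (x + 2)"
proof
  assume gap: "E 2 (x + 2)"
  have above: "\<not> E 1 x" "\<not> E 1 (x + 2)" and "\<not> E 2 (x + 1)"
    using empty_isolated_above[of 1] empty_isolated_right assms gap by (auto simp: numeral_eq_Suc)
  then have "E 1 (x + 1)"
    using house_unblocked[of 1 "x + 1"] empty_range[OF assms] empty_range[OF gap] M_ge_2
    by (auto simp: numeral_eq_Suc)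
  then show False
    using altruist_resistant[of 1 "x + 1"] assms gap by (auto simp: numeral_eq_Suc)
qed

lemma left_margin_second_row: "left_margin 2 \<noteq> 1"
proof -
  have "\<not> E 2 3" if "E 1 2"
    using altruist_resistant[OF that] by (simp add: numeral_eq_Suc)
  moreover have "\<not> E 2 3" if "E 1 3"
    using empty_isolated_below[OF that] by (simp add: numeral_eq_Suc)
  moreover have "E 2 2" if "\<not> E 1 2" "\<not> E 1 3"
    using empty_below_left_border_houses[of 1] that M_ge_2 by (simp add: numeral_eq_Suc)
  ultimately show ?thesis
    using empty_near_left_border[of 1] M_ge_2 unfolding left_margin_def by (auto split: if_splits)
qed

definition right_margin :: "nat \<Rightarrow> nat" where
  "right_margin i = (if E i (n - 1) then 0 else if E i (n - 2) then 1 else 2)"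

interpretation reflected: ES_empty_lots "\<lambda>i j. E i (n + 1 - j)" M n
  by (rule reflection)

lemma right_margin_eq_reflected: "right_margin i = reflected.left_margin i"
  unfolding right_margin_def reflected.left_margin_def using n_ge_4
  by (simp add: numeral_eq_Suc)

lemma Max_empty_cols:
  assumes "1 \<le> i" "i \<le> M"
  shows "Max (empty_cols i) = n - 1 - right_margin i"
proof (rule Max_eqI[OF finite_empty_cols])
  have "n + 1 - 2 = n - 1" "n + 1 - 3 = n - 2" "n + 1 - 4 = n - 3"
    using n_ge_4 by simp_all
  then show "n - 1 - right_margin i \<in> empty_cols i"
    using reflected.empty_near_left_border[OF assms] unfolding right_margin_def empty_cols_def
    by (cases "E i (n - 1)"; cases "E i (n - 2)") (simp_all add: numeral_eq_Suc)
  show "y \<le> n - 1 - right_margin i" if "y \<in> empty_cols i" for y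
  proof -
    have "E i y" "y + 1 \<le> n"
      using that empty_range[of i y] by (auto simp: empty_cols_def)
    then show ?thesis
      unfolding right_margin_def by (cases "y = n - 1"; cases "y = n - 2") auto
  qed
qed

lemma right_margin_step:
  assumes "1 \<le> i" "i + 1 \<le> M"
  shows "right_margin (i + 1) \<noteq> right_margin i" and "right_margin i = 2 \<Longrightarrow> right_margin (i + 1) = 0"
  using reflected.left_margin_step[OF assms] unfolding right_margin_eq_reflected .

lemma right_margin_le: "right_margin i \<le> 2"
  by (simp add: right_margin_def)

lemma right_margin_last_row: "right_margin M \<noteq> 2"
  using reflected.left_margin_last_row unfolding right_margin_eq_reflected .

lemma right_margin_second_row: "right_margin 2 \<noteq> 1"
  using reflected.left_margin_second_row unfolding right_margin_eq_reflected .

definition excess :: "nat \<Rightarrow> int" where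
  "excess i = 3 * (int (card (empty_cols i)) - 1) - (int (Max (empty_cols i)) - int (Min (empty_cols i)))"

text \<open>The end weights are chosen so that, by \<open>end_weight_step\<close>, each end of the row
  contributes nonpositively to \<open>potential (i + 1) - potential i\<close>.\<close>

definition potential :: "nat \<Rightarrow> int" where
  "potential i = 2 * excess i - end_weight (left_margin i) - end_weight (right_margin i)"

lemma excess_eq_margins:
  assumes "1 \<le> i" "i \<le> M"
  shows "excess i = 3 * (int (card (empty_cols i)) - 1) - (int n - 3) + int (left_margin i) + int (right_margin i)"
  using Min_empty_cols[OF assms] Max_empty_cols[OF assms] right_margin_le[of i] n_ge_4
  unfolding excess_def by linarith

lemma potential_step:
  assumes "1 \<le> i" "i + 1 \<le> M"
  shows "potential (i + 1) \<le> potential i"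
proof -
  have "Max (empty_cols (i + 1)) < Max (empty_cols i) \<longleftrightarrow> right_margin i < right_margin (i + 1)"
    using Max_empty_cols[of i] Max_empty_cols[of "i + 1"] assms
      right_margin_le[of i] right_margin_le[of "i + 1"] n_ge_4 by (simp, linarith)
  then have card: "card (empty_cols (i + 1)) + of_bool (left_margin i < left_margin (i + 1))
      + of_bool (right_margin i < right_margin (i + 1)) = card (empty_cols i) + 1"
    using alternating_card[OF alternating_empty_cols[OF assms]]
      Min_empty_cols[of i] Min_empty_cols[of "i + 1"] assms by simp
  have "int (card (empty_cols (i + 1))) + of_bool (left_margin i < left_margin (i + 1))
      + of_bool (right_margin i < right_margin (i + 1)) = int (card (empty_cols i)) + 1"
    using arg_cong[OF card, of int] by simp
  moreover have "2 * (int (left_margin (i + 1)) - int (left_margin i)) + 3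
      - 6 * of_bool (left_margin i < left_margin (i + 1))
      + end_weight (left_margin i) - end_weight (left_margin (i + 1)) \<le> 0"
    by (rule end_weight_step[OF left_margin_le left_margin_le left_margin_step[OF assms]])
  moreover have "2 * (int (right_margin (i + 1)) - int (right_margin i)) + 3
      - 6 * of_bool (right_margin i < right_margin (i + 1))
      + end_weight (right_margin i) - end_weight (right_margin (i + 1)) \<le> 0"
    by (rule end_weight_step[OF right_margin_le right_margin_le right_margin_step[OF assms]])
  moreover have "i \<le> M" "1 \<le> i + 1"
    using assms by simp_all
  note excess_eq_margins[OF assms(1) this(1)] excess_eq_margins[OF this(2) assms(2)]
  ultimately show ?thesis
    unfolding potential_def by (simp add: algebra_simps)
qed

lemma potential_le_second_row:
  assumes "2 \<le> i" "i \<le> M"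
  shows "potential i \<le> potential 2"
  using assms(1)
proof (induction i rule: dec_induct)
  case (step k)
  then show ?case
    using potential_step[of k] assms(2) by simp
qed simp

lemma potential_second_row_nonpos: "potential 2 \<le> 0"
proof -
  let ?S = "empty_cols 2"
  have "\<forall>x\<in>?S. \<forall>y\<in>?S. x < y \<longrightarrow> x + 3 \<le> y"
  proof (intro ballI impI)
    fix x y assume "x \<in> ?S" "y \<in> ?S" "x < y"
    moreover have "y \<noteq> x + 1" "y \<noteq> x + 2"
      using calculation empty_isolated_right second_row_no_gap_two by (auto simp: empty_cols_def)
    ultimately show "x + 3 \<le> y"
      by linarith
  qed
  then have "3 * (card ?S - 1) \<le> Max ?S - Min ?S"
    using Max_diff_Min_ge_if_spread finite_empty_cols empty_cols_nonempty M_ge_2 by simp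
  moreover have "card ?S \<noteq> 0" "Min ?S \<le> Max ?S"
    using finite_empty_cols empty_cols_nonempty[of 2] M_ge_2 by simp_all
  ultimately have "excess 2 \<le> 0"
    unfolding excess_def by (simp add: of_nat_diff flip: of_nat_le_iff)
  moreover have "end_weight (left_margin 2) \<ge> 0" "end_weight (right_margin 2) \<ge> 0"
    using left_margin_second_row right_margin_second_row by (simp_all add: end_weight_def)
  ultimately show ?thesis
    unfolding potential_def by simp
qed

lemma excess_last_row: "of_bool (\<exists>x\<in>empty_cols M. x + 2 \<in> empty_cols M) \<le> excess M"
proof -
  let ?S = "empty_cols M"
  have "Max ?S \<in> ?S" "finite ?S" "?S \<noteq> {}"
    using finite_empty_cols empty_cols_nonempty[of M] M_ge_2 by simp_all
  have "\<exists>y\<in>?S. x < y \<and> y \<le> x + 3" if "x \<in> ?S" "x < Max ?S" for x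
  proof (cases "E M (x + 2)")
    case True
    then show ?thesis
      by (auto simp: empty_cols_def)
  next
    case False
    have "Max ?S \<noteq> x + 1"
      using that \<open>Max ?S \<in> ?S\<close> empty_isolated_right by (auto simp: empty_cols_def)
    then have "x + 3 \<le> n"
      using that \<open>Max ?S \<in> ?S\<close> empty_range[of M "Max ?S"] by (auto simp: empty_cols_def)
    then have "E M (x + 3)"
      using house_unblocked[of M "x + 2"] False that(1) empty_isolated_right[of M x]
        empty_range[of "M + 1" "x + 2"] M_ge_2 by (auto simp: empty_cols_def numeral_eq_Suc)
    then show ?thesis
      by (auto simp: empty_cols_def)
  qed
  moreover have "\<forall>x\<in>?S. Suc x \<notin> ?S"
    using empty_isolated_right by (simp add: empty_cols_def)
  ultimately have "Max ?S - Min ?S + of_bool (\<exists>x\<in>?S. x + 2 \<in> ?S) \<le> 3 * (card ?S - 1)"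
    using Max_diff_Min_le_if_gaps_two_or_three \<open>finite ?S\<close> \<open>?S \<noteq> {}\<close> by blast
  then have "int (Max ?S - Min ?S + of_bool (\<exists>x\<in>?S. x + 2 \<in> ?S)) \<le> int (3 * (card ?S - 1))"
    by (simp only: of_nat_le_iff)
  moreover have "1 \<le> card ?S" "Min ?S \<le> Max ?S"
    using \<open>finite ?S\<close> \<open>?S \<noteq> {}\<close> by (simp_all add: Suc_le_eq card_gt_0_iff)
  ultimately show ?thesis
    unfolding excess_def by (simp add: of_nat_diff)
qed

lemma last_row_regular: "E M 2" "E M (n - 1)" "E M x \<Longrightarrow> \<not> E M (x + 2)"
proof -
  have "potential M \<le> 0"
    using potential_le_second_row[of M] potential_second_row_nonpos M_ge_2 by simp
  moreover have "0 \<le> excess M"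
    using excess_last_row by (rule order.trans[rotated]) simp
  moreover have "1 \<le> excess M" if "\<exists>x\<in>empty_cols M. x + 2 \<in> empty_cols M"
    using excess_last_row that by simp
  moreover have "left_margin M \<in> {0, 1}" "right_margin M \<in> {0, 1}"
    using left_margin_le[of M] left_margin_last_row right_margin_le[of M] right_margin_last_row
    by auto
  ultimately have "\<not> (\<exists>x\<in>empty_cols M. x + 2 \<in> empty_cols M)"
    and "left_margin M = 0" "right_margin M = 0"
    unfolding potential_def end_weight_def by (auto split: if_splits)
  then show "E M 2" "E M (n - 1)" "E M x \<Longrightarrow> \<not> E M (x + 2)"
    unfolding left_margin_def right_margin_def empty_cols_def by (auto split: if_splits)
qed

lemma last_row_pattern: "2 \<le> j \<Longrightarrow> j + 1 \<le> n \<Longrightarrow> E M j \<longleftrightarrow> j mod 3 = 2"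
proof (induction j rule: less_induct)
  case (less j)
  show ?case
  proof (cases "j \<le> 4")
    case True
    then have "j \<in> {2, 3, 4}"
      using less.prems by auto
    then show ?thesis
      using last_row_regular(1) last_row_regular(3)[of 2] empty_isolated_right[of M 2] by auto
  next
    case False
    define k where "k = j - 3"
    then have j: "j = k + 3" "2 \<le> k"
      using False by simp_all
    have "E M (k + 3) \<longleftrightarrow> E M k"
    proof
      assume "E M (k + 3)"
      then have "\<not> E M (k + 1)" "\<not> E M (k + 2)"
        using last_row_regular(3)[of "k + 1"] empty_isolated_left[of M "k + 2"]
        by (auto simp: numeral_eq_Suc)
      then show "E M k"
        using house_unblocked[of M "k + 1"] empty_range[of "M + 1" "k + 1"] j less.prems M_ge_2
        by auto
    next
      assume "E M k"
      then have "\<not> E M (k + 1)" "\<not> E M (k + 2)"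
        using empty_isolated_right[of M k] last_row_regular(3)[of k] by simp_all
      then show "E M (k + 3)"
        using house_unblocked[of M "k + 2"] empty_range[of "M + 1" "k + 2"] j less.prems M_ge_2
        by (auto simp: numeral_eq_Suc)
    qed
    then show ?thesis
      using less.IH[of k] less.prems j by simp
  qed
qed

lemma three_dvd_width: "3 dvd n"
proof -
  have "(n - 1) mod 3 = 2"
    using last_row_pattern[of "n - 1"] last_row_regular(2) n_ge_4 by simp
  then show ?thesis
    using mod_Suc[of "n - 1" 3] n_ge_4 by (simp add: dvd_eq_mod_eq_0)
qed

end

lemma ES_config_empty_lot:
  assumes "ES_config m n C" "in_grid m n i j" "\<not> C i j"
  shows "2 \<le> j \<and> j + 1 \<le> n \<and> i + 1 \<le> m \<and> C i (j - 1) \<and> C i (j + 1) \<and> C (i + 1) j"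
proof -
  have "blocked m n (add_house C i j) i j"
    using assms unfolding ES_config_def resistant_predators_def by blast
  moreover have "j - 1 \<noteq> j"
    using calculation unfolding blocked_def by auto
  ultimately show ?thesis
    unfolding blocked_def add_house_def in_grid_def by auto
qed

lemma ES_config_bottom_row:
  "ES_config m n C \<Longrightarrow> 1 \<le> m \<Longrightarrow> 1 \<le> j \<Longrightarrow> j \<le> n \<Longrightarrow> C m j"
  using ES_config_empty_lot[of m n C m j] by (auto simp: in_grid_def)

lemma ES_config_border_columns:
  assumes "ES_config m n C" "1 \<le> i" "i \<le> m" "1 \<le> n"
  shows "C i 1" "C i n"
  using ES_config_empty_lot[OF assms(1), of i 1] ES_config_empty_lot[OF assms(1), of i n] assms(2-)
  by (auto simp: in_grid_def)

lemma ES_config_house_unblocked: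
  assumes "ES_config m n C" "1 \<le> i" "i < m" "2 \<le> j" "j < n" "C i j"
  shows "\<not> C i (j - 1) \<or> \<not> C i (j + 1) \<or> \<not> C (i + 1) j"
  using assms unfolding ES_config_def maximal_def permissible_def blocked_def in_grid_def
  by auto

lemma ES_config_empty_lot_blocks_neighbour:
  assumes "ES_config m n C" "in_grid m n i j" "\<not> C i j"
  shows "(3 \<le> j \<and> C i (j - 2) \<and> C (i + 1) (j - 1))
    \<or> (j + 2 \<le> n \<and> C i (j + 2) \<and> C (i + 1) (j + 1))
    \<or> (2 \<le> i \<and> C (i - 1) (j - 1) \<and> C (i - 1) j \<and> C (i - 1) (j + 1))"
proof -
  obtain a b where ab: "in_grid m n a b" "C a b" and blocked: "blocked m n (add_house C i j) a b"
    using assms unfolding ES_config_def resistant_altruists_def by blast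
  have "\<not> blocked m n C a b"
    using assms(1) ab(1) unfolding ES_config_def maximal_def permissible_def by blast
  then have "(a, b - 1) = (i, j) \<or> (a, b + 1) = (i, j) \<or> (a + 1, b) = (i, j)"
    using blocked ab(2) unfolding blocked_def add_house_def by (auto split: if_splits)
  then show ?thesis
    using blocked ab assms(3) unfolding blocked_def add_house_def in_grid_def
    by (auto split: if_splits simp: numeral_eq_Suc)
qed

lemma ES_config_empty_lots:
  assumes es: "ES_config m n C" and "2 < m" "4 \<le> n"
  shows "ES_empty_lots (\<lambda>i j. in_grid m n i j \<and> \<not> C i j) (m - 1) n"
proof
  fix i j
  let ?E = "\<lambda>i j. in_grid m n i j \<and> \<not> C i j"
  show "?E i j \<Longrightarrow> 1 \<le> i \<and> i \<le> m - 1 \<and> 2 \<le> j \<and> j + 1 \<le> n"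
    using ES_config_empty_lot[OF es, of i j] by (auto simp: in_grid_def)
  show "?E i j \<Longrightarrow> \<not> ?E i (j + 1)" "?E i j \<Longrightarrow> \<not> ?E (i + 1) j"
    using ES_config_empty_lot[OF es, of i j] by blast+
  show "?E i (j - 1) \<or> ?E i (j + 1) \<or> ?E (i + 1) j"
    if "1 \<le> i" "i \<le> m - 1" "2 \<le> j" "j + 1 \<le> n" "\<not> ?E i j"
  proof -
    have "i < m" "j < n"
      using that assms(2) by linarith+
    then show ?thesis
      using ES_config_house_unblocked[OF es that(1) _ that(3)] that by (auto simp: in_grid_def)
  qed
  show "?E i j \<Longrightarrow>
        (3 \<le> j \<and> \<not> ?E i (j - 2) \<and> \<not> ?E (i + 1) (j - 1))
      \<or> (j + 2 \<le> n \<and> \<not> ?E i (j + 2) \<and> \<not> ?E (i + 1) (j + 1))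
      \<or> (2 \<le> i \<and> \<not> ?E (i - 1) (j - 1) \<and> \<not> ?E (i - 1) j \<and> \<not> ?E (i - 1) (j + 1))"
    using ES_config_empty_lot_blocks_neighbour[OF es, of i j] by blast
qed (use assms in auto)

lemma ES_config_width_three:
  assumes "ES_config m 3 C" "2 < m"
  shows "\<not> C (m - 1) 2"
proof -
  have "1 \<le> m - 1" "m - 1 < m" "m - 1 + 1 = m"
    using assms(2) by simp_all
  then show ?thesis
    using ES_config_house_unblocked[OF assms(1), of "m - 1" 2] ES_config_bottom_row[OF assms(1), of 2]
      ES_config_border_columns[OF assms(1), of "m - 1"] by auto
qed

theorem mainTheorem13:
  fixes m n :: nat and C :: "nat \<Rightarrow> nat \<Rightarrow> bool"
  assumes "m > 2" and "n > 2" and "ES_config m n C"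
  shows "3 dvd n \<and> (\<forall>j. 1 \<le> j \<and> j \<le> n \<longrightarrow> C m j)
    \<and> (\<forall>j. 1 \<le> j \<and> j \<le> n \<longrightarrow> (C (m - 1) j \<longleftrightarrow> j mod 3 \<noteq> 2))"
proof -
  have bottom: "\<forall>j. 1 \<le> j \<and> j \<le> n \<longrightarrow> C m j"
    using ES_config_bottom_row[OF assms(3)] assms(1) by auto
  have border: "C (m - 1) 1" "C (m - 1) n"
    using ES_config_border_columns[OF assms(3), of "m - 1"] assms(1,2) by simp_all
  show ?thesis
  proof (cases "n = 3")
    case True
    then have "\<not> C (m - 1) 2"
      using ES_config_width_three assms(1,3) by blast
    moreover have "j \<in> {1, 2, 3}" if "1 \<le> j" "j \<le> 3" for j :: nat
      using that by auto
    ultimately show ?thesis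
      using bottom border True by fastforce
  next
    case False
    then interpret ES_empty_lots "\<lambda>i j. in_grid m n i j \<and> \<not> C i j" "m - 1" n
      using ES_config_empty_lots assms by simp
    have "C (m - 1) j \<longleftrightarrow> j mod 3 \<noteq> 2" if "1 \<le> j" "j \<le> n" for j
      using last_row_pattern[of j] border three_dvd_width that assms(1)
      by (cases "j = 1 \<or> j = n") (auto simp: in_grid_def)
    then show ?thesis
      using bottom three_dvd_width by blast
  qed
qed

end
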